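(* Let $(\mathcal T,\{B_i\})$ be a tree decomposition of a graph $G$, rooted at $r$, with every node at level at most $d$; let $k\ge 1$ and $q\in\mathbb N$, and set $m_j := k^{j/q}\,d/k$ for $j=0,\dots,q-1$, assumed to be positive integers. Define the layer of a node $v$ as $\pi(v):=\max\big(\{-1\}\cup\{j\in\{0,\dots,q-1\}: \ell(v)\equiv 0 \pmod{m_j}\}\big)$. Define new bags $B'_r:=B_r$ and, for $v\neq r$, $$B'_v := B_v\cup\bigcup\Big\{B_w : w\in\mathcal T_{p(v)\leftrightarrow r},\ \pi(w)=\max\{\pi(u): u\in \mathcal T_{p(v)\leftrightarrow w}\}\Big\}.$$ Then $(\mathcal T,\{B'_v\})$ has combinatorial diameter at most $2q+1$.
   Context: Tree decomposition: tree with bags covering vertices and edges of $G$, each vertex's bags forming a connected subtree. $\mathcal T_{x\leftrightarrow y}$ is the set of nodes on the unique $x$–$y$ path in $\mathcal T$ (including $x$ and $y$); $p(v)$ is the parent of $v$; the level $\ell(v)$ is the number of edges on $\mathcal T_{v\leftrightarrow r}$. Combinatorial diameter: for nodes $s,t$ consider the path $\mathcal T_{s\leftrightarrow t}$. A non-endpoint node $v$ of the current path, with its two neighbours on the current path labelled $u,w$ (in some order), is redundant if $B_v\cap B_w\subseteq B_u$; bypassing $v$ deletes $v$ and joins $u,w$. The path has combinatorial length at most $\ell$ if repeatedly bypassing redundant nodes (redundancy evaluated in the current path) yields a path with at most $\ell$ edges. The combinatorial diameter is the minimum $\delta$ such that every path $\mathcal T_{u\leftrightarrow v}$ has combinatorial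 length at most $\delta$ (with respect to the given bags). *)

theory Defs
  imports Complex_Main
begin

definition rooted_tree :: "'n set \<Rightarrow> 'n \<Rightarrow> ('n \<Rightarrow> 'n) \<Rightarrow> bool" where
  "rooted_tree N r p \<longleftrightarrow> r \<in> N \<and> (\<forall>v\<in>N - {r}. p v \<in> N) \<and> (\<forall>v\<in>N. \<exists>i. (p ^^ i) v = r)"

definition tadj :: "'n set \<Rightarrow> 'n \<Rightarrow> ('n \<Rightarrow> 'n) \<Rightarrow> 'n \<Rightarrow> 'n \<Rightarrow> bool" where
  "tadj N r p x y \<longleftrightarrow> x \<in> N \<and> y \<in> N \<and> ((x \<noteq> r \<and> p x = y) \<or> (y \<noteq> r \<and> p y = x))"

definition is_tpath :: "'n set \<Rightarrow> 'n \<Rightarrow> ('n \<Rightarrow> 'n) \<Rightarrow> 'n list \<Rightarrow> 'n \<Rightarrow> 'n \<Rightarrow> bool" where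
  "is_tpath N r p xs x y \<longleftrightarrow> xs \<noteq> [] \<and> hd xs = x \<and> last xs = y \<and> distinct xs \<and> set xs \<subseteq> N \<and>
     (\<forall>i. Suc i < length xs \<longrightarrow> tadj N r p (xs ! i) (xs ! Suc i))"

definition tpath_set :: "'n set \<Rightarrow> 'n \<Rightarrow> ('n \<Rightarrow> 'n) \<Rightarrow> 'n \<Rightarrow> 'n \<Rightarrow> 'n set" where
  "tpath_set N r p x y = {z. \<exists>xs. is_tpath N r p xs x y \<and> z \<in> set xs}"

definition level :: "'n \<Rightarrow> ('n \<Rightarrow> 'n) \<Rightarrow> 'n \<Rightarrow> nat" where
  "level r p v = (LEAST i. (p ^^ i) v = r)"

definition tree_decomposition ::
  "'a set \<Rightarrow> ('a \<Rightarrow> 'a \<Rightarrow> bool) \<Rightarrow> 'n set \<Rightarrow> 'n \<Rightarrow> ('n \<Rightarrow> 'n) \<Rightarrow> ('n \<Rightarrow> 'a set) \<Rightarrow> bool" where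
  "tree_decomposition V E N r p B \<longleftrightarrow>
     rooted_tree N r p \<and>
     (\<forall>t\<in>N. B t \<subseteq> V) \<and>
     (\<forall>x\<in>V. \<exists>t\<in>N. x \<in> B t) \<and>
     (\<forall>x y. E x y \<longrightarrow> (\<exists>t\<in>N. x \<in> B t \<and> y \<in> B t)) \<and>
     (\<forall>x\<in>V. \<forall>s\<in>N. \<forall>t\<in>N. x \<in> B s \<and> x \<in> B t \<longrightarrow> (\<forall>u\<in>tpath_set N r p s t. x \<in> B u))"

definition graph :: "'a set \<Rightarrow> ('a \<Rightarrow> 'a \<Rightarrow> bool) \<Rightarrow> bool" where
  "graph V E \<longleftrightarrow> (\<forall>x y. E x y \<longrightarrow> x \<in> V \<and> y \<in> V \<and> E y x \<and> x \<noteq> y)"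

text \<open>Bypassing a redundant non-endpoint node v with current neighbours a, b
  (redundancy with the neighbours labelled u,w in either order).\<close>
inductive bypass_step :: "('n \<Rightarrow> 'a set) \<Rightarrow> 'n list \<Rightarrow> 'n list \<Rightarrow> bool" for C where
  "C v \<inter> C b \<subseteq> C a \<or> C v \<inter> C a \<subseteq> C b \<Longrightarrow>
     bypass_step C (as @ [a, v, b] @ bs) (as @ [a, b] @ bs)"

definition comb_length_le :: "('n \<Rightarrow> 'a set) \<Rightarrow> 'n list \<Rightarrow> nat \<Rightarrow> bool" where
  "comb_length_le C xs l \<longleftrightarrow> (\<exists>ys. (bypass_step C)\<^sup>*\<^sup>* xs ys \<and> length ys - 1 \<le> l)"

definition comb_diameter :: "'n set \<Rightarrow> 'n \<Rightarrow> ('n \<Rightarrow> 'n) \<Rightarrow> ('n \<Rightarrow> 'a set) \<Rightarrow> nat" where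
  "comb_diameter N r p C =
     (LEAST \<delta>. \<forall>x\<in>N. \<forall>y\<in>N. \<forall>xs. is_tpath N r p xs x y \<longrightarrow> comb_length_le C xs \<delta>)"

definition layer :: "nat \<Rightarrow> (nat \<Rightarrow> nat) \<Rightarrow> 'n \<Rightarrow> ('n \<Rightarrow> 'n) \<Rightarrow> 'n \<Rightarrow> int" where
  "layer q m r p v = Max ({-1} \<union> {int j | j. j < q \<and> level r p v mod m j = 0})"

definition new_bags :: "nat \<Rightarrow> (nat \<Rightarrow> nat) \<Rightarrow> 'n set \<Rightarrow> 'n \<Rightarrow> ('n \<Rightarrow> 'n) \<Rightarrow> ('n \<Rightarrow> 'a set) \<Rightarrow> 'n \<Rightarrow> 'a set" where
  "new_bags q m N r p B v =
     (if v = r then B r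
      else B v \<union> \<Union>{B w | w. w \<in> tpath_set N r p (p v) r \<and>
                 layer q m r p w = Max (layer q m r p ` tpath_set N r p (p v) w)})"

end

theory Submission
  imports Defs
begin

text \<open>Call \<open>(p ^^ i) v\<close>, \<open>i \<ge> 1\<close>, a record of \<open>v\<close> if its layer is at least the layer of
  every node strictly between \<open>v\<close> and it; the new bag of \<open>v\<close> is its old bag together with the
  bags of all records of \<open>v\<close>. By running intersection, whenever \<open>s\<close> and \<open>w\<close> are records of
  \<open>v\<close> with \<open>s\<close> below \<open>w\<close>, the new bags satisfy \<open>B' s \<inter> B' w \<subseteq> B' v\<close>, so \<open>s\<close> can be
  bypassed. On an upward chain from \<open>v\<close>, the segment up to the last maximum of the layer
  therefore collapses to two nodes, and above that maximum all layers are strictly smaller.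
  Recursing, each of the two monotone halves of a tree path shrinks to at most \<open>q + 2\<close> nodes,
  the last but one being a record of the meeting point; the meeting point is then redundant
  as well, which leaves at most \<open>2q + 1\<close> edges.\<close>

lemma funpow_funpow: "(f ^^ m) ((f ^^ n) x) = (f ^^ (m + n)) x"
  by (simp add: funpow_add)

fun parent_chain :: "('n \<Rightarrow> 'n) \<Rightarrow> 'n \<Rightarrow> nat \<Rightarrow> 'n list" where
  "parent_chain p v 0 = [v]"
| "parent_chain p v (Suc n) = v # parent_chain p (p v) n"

lemma length_parent_chain [simp]: "length (parent_chain p v n) = Suc n"
  by (induction n arbitrary: v) auto

lemma parent_chain_nonempty [simp]: "parent_chain p v n \<noteq> []"
  by (cases n) auto

lemma hd_parent_chain [simp]: "hd (parent_chain p v n) = v"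
  by (cases n) auto

lemma last_parent_chain [simp]: "last (parent_chain p v n) = (p ^^ n) v"
  by (induction n arbitrary: v) (auto simp: funpow_swap1)

lemma nth_parent_chain: "i \<le> n \<Longrightarrow> parent_chain p v n ! i = (p ^^ i) v"
  by (induction n arbitrary: v i) (auto simp: funpow_swap1 nth_Cons split: nat.split)

lemma set_parent_chain: "set (parent_chain p v n) = {(p ^^ i) v | i. i \<le> n}"
  by (auto simp: set_conv_nth nth_parent_chain less_Suc_eq_le) (metis nth_parent_chain)

lemma parent_chain_Suc: "parent_chain p v (Suc n) = parent_chain p v n @ [(p ^^ Suc n) v]"
  by (induction n arbitrary: v) (auto simp: funpow_Suc_right simp del: funpow.simps)

lemma parent_chain_hd_tl: "parent_chain p v n = v # tl (parent_chain p v n)"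
  by (cases n) auto

lemma parent_chain_add:
  "parent_chain p v (k + j) = parent_chain p v k @ tl (parent_chain p ((p ^^ k) v) j)"
  by (induction k arbitrary: v)
    (simp_all add: funpow_Suc_right parent_chain_hd_tl[symmetric] del: funpow.simps)

lemma rev_parent_chain: "rev (parent_chain p v n) = (p ^^ n) v # tl (rev (parent_chain p v n))"
  by (metis hd_rev last_parent_chain list.collapse parent_chain_nonempty rev_is_Nil_conv)

lemma successively_iff_nth:
  "successively P xs \<longleftrightarrow> (\<forall>i. Suc i < length xs \<longrightarrow> P (xs ! i) (xs ! Suc i))"
  by (induction P xs rule: successively.induct) (auto simp: nth_Cons split: nat.split)

locale rooted_tree_nodes =
  fixes N :: "'n set" and r :: 'n and p :: "'n \<Rightarrow> 'n"
  assumes rooted: "rooted_tree N r p"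
begin

abbreviation lv :: "'n \<Rightarrow> nat" where "lv \<equiv> level r p"

lemma funpow_level_eq_root: "v \<in> N \<Longrightarrow> (p ^^ lv v) v = r"
  using rooted unfolding rooted_tree_def level_def by (metis (mono_tags, lifting) LeastI_ex)

lemma level_le: "(p ^^ i) v = r \<Longrightarrow> lv v \<le> i"
  unfolding level_def by (rule Least_le)

lemma level_root [simp]: "lv r = 0"
  using level_le[of 0 r] by simp

lemma level_eq_0_iff: "v \<in> N \<Longrightarrow> lv v = 0 \<longleftrightarrow> v = r"
  using funpow_level_eq_root by fastforce

lemma parent_in_nodes: "v \<in> N \<Longrightarrow> v \<noteq> r \<Longrightarrow> p v \<in> N"
  using rooted unfolding rooted_tree_def by blast

lemma level_parent:
  assumes "v \<in> N" "v \<noteq> r"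
  shows "lv (p v) = lv v - 1"
proof -
  have pos: "lv v \<ge> 1" using assms level_eq_0_iff by (cases "lv v") auto
  have "(p ^^ (lv v - 1)) (p v) = r"
    using funpow_level_eq_root[OF assms(1)] pos
    by (metis Suc_diff_le diff_Suc_1 funpow_Suc_right o_apply)
  then have "lv (p v) \<le> lv v - 1" by (rule level_le)
  moreover have "(p ^^ Suc (lv (p v))) v = r"
    using funpow_level_eq_root[OF parent_in_nodes[OF assms]]
    by (simp add: funpow_Suc_right del: funpow.simps)
  then have "lv v \<le> Suc (lv (p v))" by (rule level_le)
  ultimately show ?thesis by linarith
qed

lemma funpow_in_nodes_level:
  assumes "v \<in> N" "i \<le> lv v"
  shows "(p ^^ i) v \<in> N \<and> lv ((p ^^ i) v) = lv v - i"
  using assms(2)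
proof (induction i)
  case (Suc i)
  then have u: "(p ^^ i) v \<in> N" "lv ((p ^^ i) v) = lv v - i" by auto
  then have "lv ((p ^^ i) v) \<noteq> 0" using Suc.prems by simp
  then have "(p ^^ i) v \<noteq> r" by (metis level_root)
  then show ?case using u parent_in_nodes level_parent by simp
qed (simp add: assms(1))

lemma funpow_ne_root: "v \<in> N \<Longrightarrow> i < lv v \<Longrightarrow> (p ^^ i) v \<noteq> r"
  using funpow_in_nodes_level[of v i] level_root by (metis less_imp_le_nat zero_less_diff less_irrefl)

lemma funpow_inj:
  "v \<in> N \<Longrightarrow> i \<le> lv v \<Longrightarrow> j \<le> lv v \<Longrightarrow> (p ^^ i) v = (p ^^ j) v \<Longrightarrow> i = j"
  using funpow_in_nodes_level[of v i] funpow_in_nodes_level[of v j] by auto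

lemma parent_chain_is_tpath:
  assumes "v \<in> N" "n \<le> lv v"
  shows "is_tpath N r p (parent_chain p v n) v ((p ^^ n) v)"
  unfolding is_tpath_def
proof (intro conjI allI impI)
  show "distinct (parent_chain p v n)"
    unfolding distinct_conv_nth using assms funpow_inj by (auto simp: nth_parent_chain)
  show "set (parent_chain p v n) \<subseteq> N"
    using assms funpow_in_nodes_level by (auto simp: set_parent_chain)
  fix i assume "Suc i < length (parent_chain p v n)"
  then show "tadj N r p (parent_chain p v n ! i) (parent_chain p v n ! Suc i)"
    using assms funpow_in_nodes_level[of v i] funpow_in_nodes_level[of v "Suc i"] funpow_ne_root[of v i]
    unfolding tadj_def by (auto simp: nth_parent_chain)
qed auto

lemma tadj_path_up_down:
  assumes "distinct xs" "xs \<noteq> []" "set xs \<subseteq> N" "successively (tadj N r p) xs"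
  shows "\<exists>a b. a \<le> lv (hd xs) \<and> b \<le> lv (last xs) \<and> (p ^^ a) (hd xs) = (p ^^ b) (last xs) \<and>
           xs = parent_chain p (hd xs) a @ tl (rev (parent_chain p (last xs) b))"
  using assms
proof (induction xs rule: induct_list012)
  case (2 x)
  show ?case by (intro exI[of _ 0]) simp
next
  case (3 x y zs)
  define l where "l = last (y # zs)"
  obtain a b where ab: "a \<le> lv y" "b \<le> lv l" "(p ^^ a) y = (p ^^ b) l"
    and ys: "y # zs = parent_chain p y a @ tl (rev (parent_chain p l b))"
    using "3.IH"(2) "3.prems" unfolding l_def by (metis distinct.simps(2) insert_subset list.discI list.sel(1)
        list.set(2) successively.simps(3))
  have nodes: "x \<in> N" "y \<in> N" "l \<in> N" using "3.prems"(3) unfolding l_def by auto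
  have last_eq: "last (x # y # zs) = l" unfolding l_def by simp
  consider (up) "x \<noteq> r" "p x = y" | (down) "y \<noteq> r" "p y = x" "\<not> (x \<noteq> r \<and> p x = y)"
    using "3.prems"(4) unfolding tadj_def by auto
  then show ?case
  proof cases
    case up
    have "lv y = lv x - 1" "lv x \<noteq> 0"
      using level_parent[OF nodes(1) up(1)] up level_eq_0_iff[OF nodes(1)] by auto
    then have "Suc a \<le> lv x" using ab(1) by linarith
    moreover have "(p ^^ Suc a) x = (p ^^ b) l" using ab(3) up(2)
      by (simp add: funpow_Suc_right del: funpow.simps)
    moreover have "x # y # zs = parent_chain p x (Suc a) @ tl (rev (parent_chain p l b))"
      using ys up(2) by simp
    ultimately show ?thesis using ab(2) last_eq by (intro exI[of _ "Suc a"] exI[of _ b]) simp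
  next
    case down
    have a0: "a = 0" \<comment> \<open>otherwise the path would return to \<open>x\<close>\<close>
    proof (rule ccontr)
      assume "a \<noteq> 0"
      then obtain a' where "a = Suc a'" using not0_implies_Suc by blast
      then have "x \<in> set (y # zs)" using ys down(2) by (cases a') auto
      then show False using "3.prems"(1) by simp
    qed
    have "hd (rev (parent_chain p l b)) = y" using ab(3) a0 by (simp add: hd_rev)
    then have ys': "y # zs = rev (parent_chain p l b)"
      using ys a0 by (metis append_Cons append_Nil hd_Cons_tl parent_chain.simps(1) rev_is_Nil_conv
          parent_chain_nonempty)
    have lb: "(p ^^ Suc b) l = x" using ab(3) a0 down(2) by simp
    have "lv ((p ^^ b) l) \<noteq> 0" using ab(3) a0 down(1) level_eq_0_iff nodes(2) by simp
    then have "Suc b \<le> lv l" using funpow_in_nodes_level[OF nodes(3) ab(2)] by simp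
    moreover have rv: "rev (parent_chain p l (Suc b)) = x # y # zs"
      unfolding parent_chain_Suc using ys' lb by simp
    have "x # y # zs = parent_chain p x 0 @ tl (rev (parent_chain p l (Suc b)))"
      unfolding rv by simp
    ultimately show ?thesis using lb last_eq by (intro exI[of _ 0] exI[of _ "Suc b"]) auto
  qed
qed simp

lemma tpath_up_down:
  assumes "is_tpath N r p xs x y"
  obtains a b where "a \<le> lv x" "b \<le> lv y" "(p ^^ a) x = (p ^^ b) y"
    "xs = parent_chain p x a @ tl (rev (parent_chain p y b))"
  using tadj_path_up_down assms unfolding is_tpath_def successively_iff_nth by metis

lemma tpath_set_ancestor:
  assumes "u \<in> N" "j \<le> lv u"
  shows "tpath_set N r p u ((p ^^ j) u) = {(p ^^ l) u | l. l \<le> j}"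
proof
  show "{(p ^^ l) u | l. l \<le> j} \<subseteq> tpath_set N r p u ((p ^^ j) u)"
    using parent_chain_is_tpath[OF assms] unfolding tpath_set_def set_parent_chain[symmetric] by blast
next
  let ?w = "(p ^^ j) u"
  show "tpath_set N r p u ?w \<subseteq> {(p ^^ l) u | l. l \<le> j}"
  proof
    fix z assume "z \<in> tpath_set N r p u ?w"
    then obtain xs where xs: "is_tpath N r p xs u ?w" "z \<in> set xs"
      unfolding tpath_set_def by blast
    obtain a b where ab: "a \<le> lv u" "b \<le> lv ?w" "(p ^^ a) u = (p ^^ b) ?w"
      and xs_eq: "xs = parent_chain p u a @ tl (rev (parent_chain p ?w b))"
      using tpath_up_down[OF xs(1)] .
    have "lv ?w = lv u - j" using funpow_in_nodes_level assms by blast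
    then have "a = b + j" using funpow_inj[OF assms(1) ab(1)] ab(2,3) assms(2)
      by (simp add: funpow_add)
    have "b = 0"
    proof (rule ccontr)
      assume "b \<noteq> 0"
      then have "?w \<in> set (tl (rev (parent_chain p ?w b)))"
        by (metis last_in_set last_rev last_tl hd_parent_chain
            length_parent_chain length_rev length_tl list.size(3) diff_Suc_1)
      moreover have "?w \<in> set (parent_chain p u a)"
        using \<open>a = b + j\<close> by (auto simp: set_parent_chain)
      ultimately show False using xs(1) xs_eq unfolding is_tpath_def by auto
    qed
    then show "z \<in> {(p ^^ l) u | l. l \<le> j}"
      using xs(2) xs_eq \<open>a = b + j\<close> by (simp add: set_parent_chain)
  qed
qed

end

lemma bypass_step_redundant:
  "C v \<inter> C b \<subseteq> C a \<Longrightarrow> bypass_step C (xs @ [a, v, b] @ ys) (xs @ [a, b] @ ys)"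
  by (intro bypass_step.intros) blast

lemma bypass_step_append:
  "bypass_step C xs ys \<Longrightarrow> bypass_step C (us @ xs @ ws) (us @ ys @ ws)"
proof (induction rule: bypass_step.induct)
  case (1 v b a as bs)
  then show ?case using bypass_step.intros[of C v b a "us @ as" "bs @ ws"] by simp
qed

lemma bypass_step_rev: "bypass_step C xs ys \<Longrightarrow> bypass_step C (rev xs) (rev ys)"
proof (induction rule: bypass_step.induct)
  case (1 v b a as bs)
  then show ?case using bypass_step.intros[of C v a b "rev bs" "rev as"] by auto
qed

lemma bypass_steps_append:
  "(bypass_step C)\<^sup>*\<^sup>* xs ys \<Longrightarrow> (bypass_step C)\<^sup>*\<^sup>* (us @ xs @ ws) (us @ ys @ ws)"
  by (induction rule: rtranclp_induct) (auto intro: rtranclp.rtrancl_into_rtrancl bypass_step_append)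

lemma bypass_steps_rev:
  "(bypass_step C)\<^sup>*\<^sup>* xs ys \<Longrightarrow> (bypass_step C)\<^sup>*\<^sup>* (rev xs) (rev ys)"
  by (induction rule: rtranclp_induct) (auto intro: rtranclp.rtrancl_into_rtrancl bypass_step_rev)

lemma exists_last_maximum:
  fixes f :: "nat \<Rightarrow> 'a :: linorder"
  assumes "1 \<le> n"
  shows "\<exists>k\<in>{1..n}. (\<forall>l\<in>{1..n}. f l \<le> f k) \<and> (\<forall>l\<in>{k<..n}. f l < f k)"
  using assms
proof (induction n rule: nat_induct_at_least)
  case (Suc n)
  then obtain k where k: "k \<in> {1..n}" "\<forall>l\<in>{1..n}. f l \<le> f k" "\<forall>l\<in>{k<..n}. f l < f k" by blast
  show ?case
  proof (cases "f k \<le> f (Suc n)")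
    case True
    then show ?thesis using k by (intro bexI[of _ "Suc n"]) (auto simp: le_Suc_eq intro: order_trans)
  next
    case False
    then show ?thesis using k by (intro bexI[of _ k]) (auto simp: le_Suc_eq)
  qed
qed auto

lemma parent_chain_reduces_prefix:
  assumes "k \<le> n" "(bypass_step C)\<^sup>*\<^sup>* (parent_chain p v k) [v, (p ^^ k) v]"
  shows "(bypass_step C)\<^sup>*\<^sup>* (parent_chain p v n) (v # parent_chain p ((p ^^ k) v) (n - k))"
proof -
  let ?s = "(p ^^ k) v"
  have "parent_chain p v n = parent_chain p v k @ tl (parent_chain p ?s (n - k))"
    using parent_chain_add[of p v k "n - k"] assms(1) by simp
  also have "(bypass_step C)\<^sup>*\<^sup>* \<dots> ([v, ?s] @ tl (parent_chain p ?s (n - k)))"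
    using bypass_steps_append[OF assms(2), of "[]"] by simp
  also have "[v, ?s] @ tl (parent_chain p ?s (n - k)) = v # parent_chain p ?s (n - k)"
    by (subst (2) parent_chain_hd_tl) simp
  finally show ?thesis .
qed

definition record_bags ::
  "('n \<Rightarrow> int) \<Rightarrow> 'n set \<Rightarrow> 'n \<Rightarrow> ('n \<Rightarrow> 'n) \<Rightarrow> ('n \<Rightarrow> 'a set) \<Rightarrow> 'n \<Rightarrow> 'a set" where
  "record_bags \<pi> N r p B v =
     (if v = r then B r
      else B v \<union> \<Union>{B w | w. w \<in> tpath_set N r p (p v) r \<and>
                 \<pi> w = Max (\<pi> ` tpath_set N r p (p v) w)})"

lemma new_bags_eq_record_bags: "new_bags q m N r p B = record_bags (layer q m r p) N r p B"
  by (simp add: fun_eq_iff new_bags_def record_bags_def)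

lemma layer_range: "-1 \<le> layer q m r p v \<and> layer q m r p v \<le> int q - 1"
proof -
  let ?S = "{-1} \<union> {int j | j. j < q \<and> level r p v mod m j = 0}"
  have "finite ?S" by simp
  then show ?thesis unfolding layer_def by (auto simp: Max_ge_iff)
qed

locale tree_decomposition_bags = rooted_tree_nodes N r p
  for N :: "'n set" and r :: 'n and p :: "'n \<Rightarrow> 'n" +
  fixes V :: "'a set" and E :: "'a \<Rightarrow> 'a \<Rightarrow> bool" and B :: "'n \<Rightarrow> 'a set"
  assumes decomposition: "tree_decomposition V E N r p B"
begin

lemma bag_funpow_between:
  assumes "u \<in> N" "i \<le> l" "l \<le> j" "j \<le> lv u" "e \<in> B ((p ^^ i) u)" "e \<in> B ((p ^^ j) u)"
  shows "e \<in> B ((p ^^ l) u)"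
proof -
  let ?s = "(p ^^ i) u"
  have s: "?s \<in> N" "lv ?s = lv u - i" and "(p ^^ j) u \<in> N"
    using funpow_in_nodes_level assms by auto
  have "e \<in> V" using decomposition s(1) assms(5) unfolding tree_decomposition_def by blast
  have "(p ^^ (l - i)) ?s \<in> tpath_set N r p ?s ((p ^^ (j - i)) ?s)"
    using tpath_set_ancestor[OF s(1), of "j - i"] s(2) assms(2-4) by auto
  moreover have "(p ^^ (l - i)) ?s = (p ^^ l) u" "(p ^^ (j - i)) ?s = (p ^^ j) u"
    using assms(2,3) by (simp_all add: funpow_funpow)
  ultimately show ?thesis
    using decomposition \<open>e \<in> V\<close> s(1) \<open>(p ^^ j) u \<in> N\<close> assms(5,6)
    unfolding tree_decomposition_def by metis
qed

end

locale record_bags_decomposition = tree_decomposition_bags N r p V E B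
  for N :: "'n set" and r :: 'n and p :: "'n \<Rightarrow> 'n"
    and V :: "'a set" and E :: "'a \<Rightarrow> 'a \<Rightarrow> bool" and B :: "'n \<Rightarrow> 'a set" +
  fixes \<pi> :: "'n \<Rightarrow> int"
begin

abbreviation B' :: "'n \<Rightarrow> 'a set" where "B' \<equiv> record_bags \<pi> N r p B"

definition is_record :: "'n \<Rightarrow> nat \<Rightarrow> bool" where
  "is_record v i \<longleftrightarrow> 1 \<le> i \<and> i \<le> lv v \<and> (\<forall>l\<in>{1..i}. \<pi> ((p ^^ l) v) \<le> \<pi> ((p ^^ i) v))"

lemma is_record_bounds: "is_record v i \<Longrightarrow> 1 \<le> i \<and> i \<le> lv v"
  unfolding is_record_def by blast

lemma record_bags_eq:
  assumes v: "v \<in> N" "v \<noteq> r"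
  shows "B' v = B v \<union> (\<Union>i\<in>Collect (is_record v). B ((p ^^ i) v))"
proof -
  have pv: "p v \<in> N" "lv (p v) = lv v - 1" "lv v \<noteq> 0"
    using v parent_in_nodes level_parent level_eq_0_iff by auto
  have path: "tpath_set N r p (p v) ((p ^^ i) v) = (\<lambda>l. (p ^^ l) v) ` {1..i}"
    if "1 \<le> i" "i \<le> lv v" for i
  proof -
    have "(p ^^ i) v = (p ^^ (i - 1)) (p v)"
      using that by (metis Suc_diff_le diff_Suc_1 funpow_Suc_right o_apply)
    then have "tpath_set N r p (p v) ((p ^^ i) v) = {(p ^^ l) (p v) | l. l \<le> i - 1}"
      using tpath_set_ancestor[OF pv(1), of "i - 1"] pv(2) that by simp
    also have "\<dots> = (\<lambda>l. (p ^^ l) v) ` Suc ` {..<i}"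
      using that by (force simp: image_iff funpow_Suc_right simp del: funpow.simps)
    also have "\<dots> = (\<lambda>l. (p ^^ l) v) ` {1..i}"
      by (simp only: image_Suc_lessThan)
    finally show ?thesis .
  qed
  have "(p ^^ lv v) v = r" using funpow_level_eq_root v(1) by blast
  then have root_path: "tpath_set N r p (p v) r = (\<lambda>l. (p ^^ l) v) ` {1..lv v}"
    using path[of "lv v"] pv(3) by simp
  have record_iff: "\<pi> ((p ^^ i) v) = Max (\<pi> ` tpath_set N r p (p v) ((p ^^ i) v)) \<longleftrightarrow> is_record v i"
    if "1 \<le> i" "i \<le> lv v" for i
    unfolding path[OF that] is_record_def using that by (subst eq_commute, subst Max_eq_iff) auto
  have "{w. w \<in> tpath_set N r p (p v) r \<and> \<pi> w = Max (\<pi> ` tpath_set N r p (p v) w)} =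
        (\<lambda>i. (p ^^ i) v) ` Collect (is_record v)" (is "?W = _")
  proof (intro set_eqI iffI)
    fix w assume "w \<in> ?W"
    then obtain i where "1 \<le> i" "i \<le> lv v" "w = (p ^^ i) v" "\<pi> w = Max (\<pi> ` tpath_set N r p (p v) w)"
      unfolding root_path by auto
    then show "w \<in> (\<lambda>i. (p ^^ i) v) ` Collect (is_record v)" using record_iff by auto
  next
    fix w assume "w \<in> (\<lambda>i. (p ^^ i) v) ` Collect (is_record v)"
    then obtain i where "is_record v i" "w = (p ^^ i) v" by auto
    then show "w \<in> ?W" using record_iff[of i] is_record_bounds[of v i] unfolding root_path by auto
  qed
  moreover have "B' v = B v \<union> \<Union> (B ` ?W)"
    unfolding record_bags_def setcompr_eq_image using v(2) by simp
  ultimately show ?thesis by (simp add: image_image)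
qed

lemma record_bag_subset: "v \<in> N \<Longrightarrow> is_record v i \<Longrightarrow> B ((p ^^ i) v) \<subseteq> B' v"
  using record_bags_eq[of v] is_record_bounds[of v i] by fastforce

lemma record_bags_root: "B' r = B r"
  unfolding record_bags_def by simp

lemma record_bags_elim:
  assumes "w \<in> N" "e \<in> B' w"
  obtains k where "k = 0 \<or> is_record w k" "k \<le> lv w" "e \<in> B ((p ^^ k) w)"
proof (cases "w = r")
  case True
  then show ?thesis using that[of 0] assms(2) record_bags_root by simp
next
  case False
  then show ?thesis using that assms record_bags_eq is_record_bounds by fastforce
qed

lemma is_record_extend:
  assumes "is_record a i" "i < j" "j \<le> lv a" "\<forall>l\<in>{i..j}. \<pi> ((p ^^ l) a) \<le> \<pi> ((p ^^ j) a)"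
  shows "is_record a j"
  unfolding is_record_def
proof (intro conjI ballI)
  fix l assume l: "l \<in> {1..j}"
  show "\<pi> ((p ^^ l) a) \<le> \<pi> ((p ^^ j) a)"
  proof (cases "l \<le> i")
    case True
    then have "\<pi> ((p ^^ l) a) \<le> \<pi> ((p ^^ i) a)" using assms(1) l unfolding is_record_def by auto
    moreover have "\<pi> ((p ^^ i) a) \<le> \<pi> ((p ^^ j) a)" using assms(2,4) by simp
    ultimately show ?thesis by linarith
  qed (use assms(4) l in auto)
qed (use assms is_record_bounds in auto)

lemma is_record_suffix:
  assumes "v \<in> N" "is_record v n" "k < n"
  shows "is_record ((p ^^ k) v) (n - k)"
proof -
  have "lv ((p ^^ k) v) = lv v - k"
    using assms is_record_bounds funpow_in_nodes_level by (meson less_imp_le_nat order_trans)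
  moreover have "\<pi> ((p ^^ (l + k)) v) \<le> \<pi> ((p ^^ n) v)" if "l \<in> {1..n - k}" for l
    using assms(2) that unfolding is_record_def by auto
  ultimately show ?thesis
    using assms is_record_bounds unfolding is_record_def by (auto simp: funpow_funpow)
qed

text \<open>If \<open>e\<close> reached \<open>B' ((p ^^ i) a)\<close> through a record of \<open>(p ^^ i) a\<close> of layer at least
  \<open>\<pi> ((p ^^ i) a)\<close>, that record would be a record of \<open>a\<close> too.\<close>

lemma record_bags_escape:
  assumes a: "a \<in> N" "is_record a i" and e: "e \<in> B' ((p ^^ i) a)" "e \<notin> B' a"
  obtains j where "i < j" "j \<le> lv a" "e \<in> B ((p ^^ j) a)"
    "\<forall>l\<in>{i<..j}. \<pi> ((p ^^ l) a) < \<pi> ((p ^^ i) a)"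
proof -
  let ?z = "(p ^^ i) a"
  have z: "?z \<in> N" "lv ?z = lv a - i" "i \<le> lv a"
    using funpow_in_nodes_level a is_record_bounds by auto
  obtain k where k: "k = 0 \<or> is_record ?z k" "k \<le> lv ?z" "e \<in> B ((p ^^ k) ?z)"
    using record_bags_elim[OF z(1) e(1)] .
  have "k \<noteq> 0" using k(3) e(2) record_bag_subset[OF a] by (metis funpow_0 subsetD)
  then have rk: "is_record ?z k" "1 \<le> k" using k(1) is_record_bounds by auto
  have below_j: "\<pi> ((p ^^ l) a) \<le> \<pi> ((p ^^ (k + i)) a)" if "l \<in> {i<..k + i}" for l
    using rk(1) that unfolding is_record_def
    by (auto simp: funpow_funpow dest!: bspec[of _ _ "l - i"])
  have eB: "e \<in> B ((p ^^ (k + i)) a)" using k(3) by (simp add: funpow_funpow)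
  have "\<not> \<pi> ((p ^^ i) a) \<le> \<pi> ((p ^^ (k + i)) a)"
  proof
    assume up: "\<pi> ((p ^^ i) a) \<le> \<pi> ((p ^^ (k + i)) a)"
    have "\<forall>l\<in>{i..k + i}. \<pi> ((p ^^ l) a) \<le> \<pi> ((p ^^ (k + i)) a)"
    proof
      fix l assume "l \<in> {i..k + i}"
      then have "l = i \<or> l \<in> {i<..k + i}" by auto
      then show "\<pi> ((p ^^ l) a) \<le> \<pi> ((p ^^ (k + i)) a)" using up below_j by auto
    qed
    then have "is_record a (k + i)"
      using is_record_extend[OF a(2), of "k + i"] rk(2) k(2) z by auto
    then show False using eB e(2) record_bag_subset[OF a(1)] by blast
  qed
  then show ?thesis
    using that[of "k + i"] below_j rk(2) k(2) z eB by fastforce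
qed

lemma record_bags_upward:
  assumes a: "a \<in> N" "is_record a i" and e: "e \<in> B' ((p ^^ i) a)" "e \<in> B ((p ^^ k) a)"
    and k: "i < k0" "k0 \<le> k" "k \<le> lv a" "\<pi> ((p ^^ i) a) \<le> \<pi> ((p ^^ k0) a)"
  shows "e \<in> B' a"
proof (rule ccontr)
  assume "e \<notin> B' a"
  then obtain j where j: "i < j" "j \<le> lv a" "e \<in> B ((p ^^ j) a)"
    "\<forall>l\<in>{i<..j}. \<pi> ((p ^^ l) a) < \<pi> ((p ^^ i) a)"
    using record_bags_escape[OF a e(1)] by blast
  \<comment> \<open>the first node above \<open>(p ^^ i) a\<close> reaching its layer is a record of \<open>a\<close>\<close>
  define P where "P l \<longleftrightarrow> i < l \<and> \<pi> ((p ^^ i) a) \<le> \<pi> ((p ^^ l) a)" for l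
  define k1 where "k1 = (LEAST l. P l)"
  have "P k0" using k unfolding P_def by simp
  then have k1: "P k1" "k1 \<le> k0" unfolding k1_def by (auto intro: LeastI Least_le)
  have below: "\<pi> ((p ^^ l) a) < \<pi> ((p ^^ i) a)" if "i < l" "l < k1" for l
  proof -
    have "\<not> P l" using not_less_Least[of l P] that(2) unfolding k1_def by blast
    then show ?thesis using that(1) unfolding P_def by auto
  qed
  have "j < k1" using j(4) k1(1) unfolding P_def by (meson greaterThanAtMost_iff linorder_not_less)
  then have "e \<in> B ((p ^^ k1) a)"
    using bag_funpow_between[OF a(1) _ _ k(3) j(3) e(2)] k1(2) k(2) by simp
  moreover have "is_record a k1"
  proof (rule is_record_extend[OF a(2)])
    show "i < k1" "k1 \<le> lv a" using k1 k unfolding P_def by auto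
    show "\<forall>l\<in>{i..k1}. \<pi> ((p ^^ l) a) \<le> \<pi> ((p ^^ k1) a)"
      using below k1(1) unfolding P_def by (force simp: le_less)
  qed
  ultimately show False using \<open>e \<notin> B' a\<close> record_bag_subset[OF a(1)] by blast
qed

lemma record_bags_downward:
  assumes a: "a \<in> N" "is_record a i" and e: "e \<in> B' ((p ^^ i) a)" "e \<in> B t"
    and t: "t \<in> N" "k \<le> lv t" "(p ^^ k) t = (p ^^ i) a"
  shows "e \<in> B' a"
proof (rule ccontr)
  assume "e \<notin> B' a"
  then obtain j where j: "i < j" "j \<le> lv a" "e \<in> B ((p ^^ j) a)"
    using record_bags_escape[OF a e(1)] by blast
  have "lv ((p ^^ i) a) = lv a - i" "lv ((p ^^ k) t) = lv t - k"
    using funpow_in_nodes_level a(1) t(1,2) j by auto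
  then have "j - i + k \<le> lv t" using t(3) j by simp
  moreover have "(p ^^ j) a = (p ^^ (j - i + k)) t"
    using t(3) j(1) by (metis funpow_funpow le_add_diff_inverse2 less_imp_le_nat)
  ultimately have "e \<in> B ((p ^^ k) t)"
    using bag_funpow_between[OF t(1), of 0 k "j - i + k"] e(2) j(3) by simp
  then show False using \<open>e \<notin> B' a\<close> record_bag_subset[OF a] t(3) by auto
qed

lemma record_bags_inter_records:
  assumes v: "v \<in> N" "is_record v k" "is_record v n" and "k < n"
  shows "B' ((p ^^ k) v) \<inter> B' ((p ^^ n) v) \<subseteq> B' v"
proof
  fix e assume e: "e \<in> B' ((p ^^ k) v) \<inter> B' ((p ^^ n) v)"
  have n: "n \<le> lv v" "(p ^^ n) v \<in> N" "lv ((p ^^ n) v) = lv v - n"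
    using is_record_bounds[OF v(3)] funpow_in_nodes_level v(1) by auto
  obtain k' where "k' \<le> lv ((p ^^ n) v)" "e \<in> B ((p ^^ k') ((p ^^ n) v))"
    using record_bags_elim[OF n(2)] e by blast
  then have "k' + n \<le> lv v" "e \<in> B ((p ^^ (k' + n)) v)" using n by (auto simp: funpow_funpow)
  moreover have "\<pi> ((p ^^ k) v) \<le> \<pi> ((p ^^ n) v)"
    using v(3) is_record_bounds[OF v(2)] \<open>k < n\<close> unfolding is_record_def by auto
  ultimately show "e \<in> B' v"
    using record_bags_upward[OF v(1,2), of e "k' + n" n] e \<open>k < n\<close> by auto
qed

lemma record_bags_meeting_point:
  assumes a: "a \<in> N" "is_record a i" and b: "b \<in> N" "is_record b j"
    and meet: "(p ^^ i) a = (p ^^ j) b"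
  shows "B' ((p ^^ i) a) \<inter> B' b \<subseteq> B' a"
proof
  fix e assume e: "e \<in> B' ((p ^^ i) a) \<inter> B' b"
  obtain k where k: "k = 0 \<or> is_record b k" "k \<le> lv b" "e \<in> B ((p ^^ k) b)"
    using record_bags_elim[OF b(1)] e by blast
  have ij: "i \<le> lv a" "j \<le> lv b" using is_record_bounds a(2) b(2) by auto
  have lv_meet: "lv a - i = lv b - j"
    using funpow_in_nodes_level[OF a(1) ij(1)] funpow_in_nodes_level[OF b(1) ij(2)] meet by simp
  show "e \<in> B' a"
  proof (cases "k \<le> j")
    case True
    have "(p ^^ (j - k)) ((p ^^ k) b) = (p ^^ i) a" using True meet by (simp add: funpow_funpow)
    moreover have "(p ^^ k) b \<in> N" "lv ((p ^^ k) b) = lv b - k"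
      using funpow_in_nodes_level[OF b(1) k(2)] by auto
    ultimately show ?thesis
      using record_bags_downward[OF a, of e "(p ^^ k) b" "j - k"] e k(3) True ij by auto
  next
    case False
    then have "is_record b k" using k(1) by auto
    then have "\<pi> ((p ^^ j) b) \<le> \<pi> ((p ^^ k) b)"
      using False is_record_bounds[OF b(2)] unfolding is_record_def by auto
    moreover have "(p ^^ (k - j + i)) a = (p ^^ k) b"
      using False meet by (metis funpow_funpow le_add_diff_inverse2 nat_le_linear)
    ultimately show ?thesis
      using record_bags_upward[OF a, of e "k - j + i" "k - j + i"] e k False ij lv_meet meet by auto
  qed
qed

lemma record_chain_reduces:
  assumes "v \<in> N" "is_record v n"
  shows "(bypass_step B')\<^sup>*\<^sup>* (parent_chain p v n) [v, (p ^^ n) v]"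
  using assms
proof (induction n arbitrary: v rule: less_induct)
  case (less n)
  have n: "1 \<le> n" "n \<le> lv v" using is_record_bounds less.prems(2) by auto
  show ?case
  proof (cases "n = 1")
    case False
    have "1 \<le> n - 1" using n False by simp
    then obtain k where k: "k \<in> {1..n - 1}" "\<forall>l\<in>{1..n - 1}. \<pi> ((p ^^ l) v) \<le> \<pi> ((p ^^ k) v)"
      using exists_last_maximum[of "n - 1" "\<lambda>l. \<pi> ((p ^^ l) v)"] by blast
    let ?s = "(p ^^ k) v" and ?w = "(p ^^ n) v"
    have kn: "k < n" "n - k < n" using k n by auto
    have rk: "is_record v k" unfolding is_record_def using k n by auto
    have s: "?s \<in> N" "(p ^^ (n - k)) ?s = ?w"
      using funpow_in_nodes_level[OF less.prems(1)] k n by (auto simp: funpow_funpow)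
    have "(bypass_step B')\<^sup>*\<^sup>* (parent_chain p v n) ([v] @ parent_chain p ?s (n - k) @ [])"
      using parent_chain_reduces_prefix[OF _ less.IH[OF kn(1) less.prems(1) rk]] kn by simp
    also have "(bypass_step B')\<^sup>*\<^sup>* \<dots> ([v] @ [?s, ?w] @ [])"
      using bypass_steps_append[OF less.IH[OF kn(2) s(1) is_record_suffix[OF less.prems kn(1)]],
          of "[v]" "[]"] s(2)
      by simp
    also have "(bypass_step B')\<^sup>*\<^sup>* \<dots> [v, ?w]"
      using bypass_step_redundant[of B' ?s ?w v "[]" "[]"]
        record_bags_inter_records[OF less.prems(1) rk less.prems(2) kn(1)] by auto
    finally show ?thesis .
  qed simp
qed

text \<open>Split the chain at the last maximum \<open>k\<close> of the layer: the part up to \<open>k\<close> collapses to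
  two nodes, and strictly above \<open>k\<close> the layers stay below \<open>\<pi> ((p ^^ k) v)\<close>.\<close>

lemma parent_chain_reduces:
  assumes "v \<in> N" "1 \<le> n" "n \<le> lv v" "\<forall>l\<in>{1..n}. \<pi> ((p ^^ l) v) \<le> M"
  shows "\<exists>Xs a i. (bypass_step B')\<^sup>*\<^sup>* (parent_chain p v n) (Xs @ [a, (p ^^ n) v]) \<and>
           a \<in> N \<and> is_record a i \<and> (p ^^ i) a = (p ^^ n) v \<and> int (length Xs) \<le> M - \<pi> ((p ^^ n) v)"
  using assms
proof (induction n arbitrary: v M rule: less_induct)
  case (less n)
  obtain k where k: "k \<in> {1..n}" "\<forall>l\<in>{1..n}. \<pi> ((p ^^ l) v) \<le> \<pi> ((p ^^ k) v)"
    "\<forall>l\<in>{k<..n}. \<pi> ((p ^^ l) v) < \<pi> ((p ^^ k) v)"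
    using exists_last_maximum[OF less.prems(2), of "\<lambda>l. \<pi> ((p ^^ l) v)"] by blast
  let ?s = "(p ^^ k) v" and ?w = "(p ^^ n) v"
  have rk: "is_record v k" unfolding is_record_def using k less.prems(3) by auto
  have chain_k: "(bypass_step B')\<^sup>*\<^sup>* (parent_chain p v k) [v, ?s]"
    using record_chain_reduces[OF less.prems(1) rk] .
  show ?case
  proof (cases "k = n")
    case True
    then show ?thesis using chain_k less.prems(1,2,4) rk
      by (intro exI[of _ "[]"] exI[of _ v] exI[of _ n]) auto
  next
    case False
    then have kn: "k < n" "n - k < n" "1 \<le> n - k" using k by auto
    have s: "?s \<in> N" "lv ?s = lv v - k" "(p ^^ (n - k)) ?s = ?w"
      using funpow_in_nodes_level[OF less.prems(1)] k less.prems(3) by (auto simp: funpow_funpow)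
    have lv_s: "n - k \<le> lv ?s" using s(2) less.prems(3) by simp
    have below: "\<forall>l\<in>{1..n - k}. \<pi> ((p ^^ l) ?s) \<le> \<pi> ?s - 1"
      using k(3) by (force simp: funpow_funpow)
    obtain Xs a i where
      Xs: "(bypass_step B')\<^sup>*\<^sup>* (parent_chain p ?s (n - k)) (Xs @ [a, ?w])"
        "a \<in> N" "is_record a i" "(p ^^ i) a = ?w" "int (length Xs) \<le> \<pi> ?s - 1 - \<pi> ?w"
      using less.IH[OF kn(2) s(1) kn(3) lv_s below] unfolding s(3) by blast
    have "(bypass_step B')\<^sup>*\<^sup>* (parent_chain p v n) ([v] @ parent_chain p ?s (n - k) @ [])"
      using parent_chain_reduces_prefix[OF _ chain_k] kn by simp
    also have "(bypass_step B')\<^sup>*\<^sup>* \<dots> ((v # Xs) @ [a, ?w])"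
      using bypass_steps_append[OF Xs(1), of "[v]" "[]"] by simp
    finally have "(bypass_step B')\<^sup>*\<^sup>* (parent_chain p v n) ((v # Xs) @ [a, ?w])" .
    moreover have "int (length (v # Xs)) \<le> M - \<pi> ?w"
      using Xs(5) less.prems(4) k(1) by fastforce
    ultimately show ?thesis using Xs(2-4) by blast
  qed
qed

lemma parent_chain_reduces_bounded:
  assumes spread: "\<forall>u\<in>N. \<forall>w\<in>N. \<pi> u - \<pi> w \<le> int q" and v: "v \<in> N" "n \<le> lv v"
  obtains Zs where "(bypass_step B')\<^sup>*\<^sup>* (parent_chain p v n) (Zs @ [(p ^^ n) v])" "length Zs \<le> q + 1"
    "Zs \<noteq> [] \<Longrightarrow> last Zs \<in> N \<and> (\<exists>i. is_record (last Zs) i \<and> (p ^^ i) (last Zs) = (p ^^ n) v)"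
proof (cases "n = 0")
  case True
  then show ?thesis using that[of "[]"] by simp
next
  case False
  then obtain k where k: "k \<in> {1..n}" "\<forall>l\<in>{1..n}. \<pi> ((p ^^ l) v) \<le> \<pi> ((p ^^ k) v)"
    using exists_last_maximum[of n "\<lambda>l. \<pi> ((p ^^ l) v)"] by force
  obtain Xs a i where Xs: "(bypass_step B')\<^sup>*\<^sup>* (parent_chain p v n) (Xs @ [a, (p ^^ n) v])"
    "a \<in> N" "is_record a i" "(p ^^ i) a = (p ^^ n) v"
    "int (length Xs) \<le> \<pi> ((p ^^ k) v) - \<pi> ((p ^^ n) v)"
    using parent_chain_reduces[OF v(1) _ v(2) k(2)] False by force
  have "(p ^^ k) v \<in> N" "(p ^^ n) v \<in> N" using funpow_in_nodes_level v k(1) by auto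
  then have "length Xs \<le> q" using Xs(5) spread by fastforce
  then show ?thesis using that[of "Xs @ [a]"] Xs(1-4) by auto
qed

lemma tpath_comb_length_le:
  assumes spread: "\<forall>u\<in>N. \<forall>w\<in>N. \<pi> u - \<pi> w \<le> int q" and xs: "is_tpath N r p xs x y"
  shows "comb_length_le B' xs (2 * q + 1)"
proof -
  have x: "x \<in> N" and y: "y \<in> N"
    using xs unfolding is_tpath_def by (auto dest: hd_in_set last_in_set)
  obtain a b where ab: "a \<le> lv x" "b \<le> lv y" "(p ^^ a) x = (p ^^ b) y"
    and xs_eq: "xs = parent_chain p x a @ tl (rev (parent_chain p y b))"
    using tpath_up_down[OF xs] .
  let ?z = "(p ^^ a) x"
  obtain T where rev_y: "rev (parent_chain p y b) = ?z # T" and xs_T: "xs = parent_chain p x a @ T"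
    using xs_eq ab(3) rev_parent_chain by metis
  obtain Xs where Xs: "(bypass_step B')\<^sup>*\<^sup>* (parent_chain p x a) (Xs @ [?z])" "length Xs \<le> q + 1"
    "Xs \<noteq> [] \<Longrightarrow> last Xs \<in> N \<and> (\<exists>i. is_record (last Xs) i \<and> (p ^^ i) (last Xs) = ?z)"
    using parent_chain_reduces_bounded[OF spread x ab(1)] by blast
  obtain Ys where Ys: "(bypass_step B')\<^sup>*\<^sup>* (parent_chain p y b) (Ys @ [?z])" "length Ys \<le> q + 1"
    "Ys \<noteq> [] \<Longrightarrow> last Ys \<in> N \<and> (\<exists>j. is_record (last Ys) j \<and> (p ^^ j) (last Ys) = ?z)"
    using parent_chain_reduces_bounded[OF spread y ab(2)] ab(3) by metis
  have "(bypass_step B')\<^sup>*\<^sup>* xs (Xs @ rev (parent_chain p y b) @ [])"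
    unfolding xs_T rev_y using bypass_steps_append[OF Xs(1), of "[]" T] by simp
  also have "(bypass_step B')\<^sup>*\<^sup>* \<dots> (Xs @ rev (Ys @ [?z]) @ [])"
    by (rule bypass_steps_append[OF bypass_steps_rev[OF Ys(1)]])
  finally have reduced: "(bypass_step B')\<^sup>*\<^sup>* xs (Xs @ [?z] @ rev Ys)" by simp
  have "\<exists>ys. (bypass_step B')\<^sup>*\<^sup>* xs ys \<and> length ys \<le> 2 * q + 2"
  proof (cases "Xs = [] \<or> Ys = []")
    case True
    then show ?thesis using reduced Xs(2) Ys(2) by (intro exI[of _ "Xs @ [?z] @ rev Ys"]) auto
  next
    case False
    then obtain a1 b1 Xs' Ys' where "Xs = Xs' @ [a1]" "Ys = Ys' @ [b1]" by (metis rev_exhaust)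
    moreover have "B' ?z \<inter> B' b1 \<subseteq> B' a1"
      using record_bags_meeting_point Xs(3) Ys(3) False calculation by (metis last_snoc)
    ultimately have "bypass_step B' (Xs @ [?z] @ rev Ys) (Xs' @ [a1, b1] @ rev Ys')"
      using bypass_step_redundant[of B' ?z b1 a1 Xs' "rev Ys'"] by simp
    then show ?thesis using reduced Xs(2) Ys(2) \<open>Xs = Xs' @ [a1]\<close> \<open>Ys = Ys' @ [b1]\<close>
      by (intro exI[of _ "Xs' @ [a1, b1] @ rev Ys'"]) auto
  qed
  then show ?thesis unfolding comb_length_le_def by fastforce
qed

lemma comb_diameter_record_bags_le:
  assumes "\<forall>u\<in>N. \<forall>w\<in>N. \<pi> u - \<pi> w \<le> int q"
  shows "comb_diameter N r p B' \<le> 2 * q + 1"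
  unfolding comb_diameter_def by (rule Least_le) (use tpath_comb_length_le[OF assms] in blast)

end

theorem lemma4p5:
  fixes V :: "'a set" and E :: "'a \<Rightarrow> 'a \<Rightarrow> bool"
    and N :: "'n set" and r :: 'n and p :: "'n \<Rightarrow> 'n" and B :: "'n \<Rightarrow> 'a set"
    and d q :: nat and k :: real and m :: "nat \<Rightarrow> nat"
  assumes "graph V E"
    and "rooted_tree N r p"
    and "tree_decomposition V E N r p B"
    and "\<forall>v\<in>N. level r p v \<le> d"
    and "k \<ge> 1"
    and "\<forall>j<q. m j > 0 \<and> real (m j) = k powr (real j / real q) * real d / k"
  shows "comb_diameter N r p (new_bags q m N r p B) \<le> 2 * q + 1"
proof -
  \<comment> \<open>only the range of the layer function matters\<close>
  interpret record_bags_decomposition N r p V E B "layer q m r p"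
    using assms(2,3) by unfold_locales
  have "\<forall>u\<in>N. \<forall>w\<in>N. layer q m r p u - layer q m r p w \<le> int q"
    using layer_range by (smt (verit))
  then show ?thesis unfolding new_bags_eq_record_bags by (rule comb_diameter_record_bags_le)
qed

end
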